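(* Let $\Gamma=\mathrm{Cay}(G,S)$ be a distance-regular Cayley graph with intersection array $\{k,k-1,k-\mu;1,\mu,k\}$ (so $\Gamma$ is bipartite of diameter $3$), and let $H$ be the part of this bipartite graph containing the identity element. If $|H|\not\equiv 0\pmod 4$, or $k$ is odd, or $H$ is abelian, then $\Gamma$ is isomorphic to a Cayley graph on some semidirect product $H\rtimes\mathbb{Z}_2$.
   Context: For a finite group $G$ with identity $e$ and a subset $S\subseteq G\setminus\{e\}$ with $S=S^{-1}$, the Cayley graph $\mathrm{Cay}(G,S)$ has vertex set $G$, two vertices $a,b$ being adjacent iff $ab^{-1}\in S$. A connected graph of diameter $d$ is distance-regular with intersection array $\{b_0,\dots,b_{d-1};c_1,\dots,c_d\}$ if for all vertices $x,y$ at distance $i$, the number of neighbours of $x$ at distance $i+1$ (resp. $i-1$) from $y$ is $b_i$ (resp. $c_i$). *)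

theory Defs
  imports "HOL-Algebra.Algebra"
begin

definition cay_adj :: "('a, 'b) monoid_scheme \<Rightarrow> 'a set \<Rightarrow> 'a \<Rightarrow> 'a \<Rightarrow> bool" where
  "cay_adj G S a b \<longleftrightarrow> a \<in> carrier G \<and> b \<in> carrier G \<and> a \<otimes>\<^bsub>G\<^esub> inv\<^bsub>G\<^esub> b \<in> S"

definition gdist :: "('a \<Rightarrow> 'a \<Rightarrow> bool) \<Rightarrow> 'a \<Rightarrow> 'a \<Rightarrow> nat" where
  "gdist Adj x y = (LEAST n. (Adj ^^ n) x y)"

definition connected_graph :: "'a set \<Rightarrow> ('a \<Rightarrow> 'a \<Rightarrow> bool) \<Rightarrow> bool" where
  "connected_graph V Adj \<longleftrightarrow> (\<forall>x\<in>V. \<forall>y\<in>V. \<exists>n. (Adj ^^ n) x y)"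

definition has_diameter :: "'a set \<Rightarrow> ('a \<Rightarrow> 'a \<Rightarrow> bool) \<Rightarrow> nat \<Rightarrow> bool" where
  "has_diameter V Adj d \<longleftrightarrow>
     (\<forall>x\<in>V. \<forall>y\<in>V. gdist Adj x y \<le> d) \<and> (\<exists>x\<in>V. \<exists>y\<in>V. gdist Adj x y = d)"

text \<open>Distance-regular with intersection array {bs!0,...,bs!(d-1); cs!0,...,cs!(d-1)},
  i.e. b_i = bs!i (0 \<le> i < d) and c_i = cs!(i-1) (1 \<le> i \<le> d), where d = length bs.\<close>
definition distance_regular ::
  "'a set \<Rightarrow> ('a \<Rightarrow> 'a \<Rightarrow> bool) \<Rightarrow> nat list \<Rightarrow> nat list \<Rightarrow> bool" where
  "distance_regular V Adj bs cs \<longleftrightarrow>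
     finite V \<and> V \<noteq> {} \<and> length cs = length bs \<and>
     connected_graph V Adj \<and> has_diameter V Adj (length bs) \<and>
     (\<forall>x\<in>V. \<forall>y\<in>V. let i = gdist Adj x y in
        (i < length bs \<longrightarrow>
           card {z \<in> V. Adj x z \<and> gdist Adj z y = i + 1} = bs ! i) \<and>
        (1 \<le> i \<longrightarrow>
           card {z \<in> V. Adj x z \<and> gdist Adj z y = i - 1} = cs ! (i - 1)))"

definition graph_iso ::
  "'a set \<Rightarrow> ('a \<Rightarrow> 'a \<Rightarrow> bool) \<Rightarrow> 'c set \<Rightarrow> ('c \<Rightarrow> 'c \<Rightarrow> bool) \<Rightarrow> bool" where
  "graph_iso V1 A1 V2 A2 \<longleftrightarrow>
     (\<exists>f. bij_betw f V1 V2 \<and> (\<forall>x\<in>V1. \<forall>y\<in>V1. A1 x y \<longleftrightarrow> A2 (f x) (f y)))"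

section \<open>Semidirect product H \<rtimes>_phi Z_2 (Z_2 realised as bool with xor)\<close>

definition semidirect_Z2 :: "('a, 'b) monoid_scheme \<Rightarrow> ('a \<Rightarrow> 'a) \<Rightarrow> ('a \<times> bool) monoid" where
  "semidirect_Z2 H \<phi> =
     \<lparr> carrier = carrier H \<times> UNIV,
       monoid.mult = (\<lambda>(h1, a) (h2, b). (h1 \<otimes>\<^bsub>H\<^esub> (if a then \<phi> h2 else h2), a \<noteq> b)),
       monoid.one = (\<one>\<^bsub>H\<^esub>, False) \<rparr>"

end

(*
  All numbers a_i = k - b_i - c_i of the intersection array vanish, so no edge joins two vertices
  at the same distance from a third: the graph is bipartite, and the colour class H of the
  identity is a subgroup of G of index two (distances to the identity change parity along edges,
  and right multiplications are automorphisms).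

  Let phi be an involutive automorphism of H and a an element of G - H such that the map
  u |-> phi(a^-1 u) a^-1 preserves membership in S on G - H. Then g |-> (g, 0) on H and
  g |-> (phi(a^-1 g), 1) on G - H is an isomorphism onto a Cayley graph of H x|_phi Z_2. Such
  data exist if H is abelian (phi the inversion, a in S), or if G - H contains an involution b
  (phi the conjugation by b, a = b).

  An involution outside H exists if k = |S| is odd (pair up s and s^-1), or if |H| is odd
  (an odd power of any s in S). If |H| = 2m with m odd, the left regular representation of H
  contains odd permutations, and the kernel K of its sign has odd order m. If no involution lies
  outside H, then s^2 is not in K for s in S, so (s, t) |-> (s^-1, t) exchanges the pairs in
  S x S with product in K and those with product in H - K. Counting both sets with the
  intersection numbers gives k + (m - 1) mu = m mu, contradicting mu < k.
*)

theory Submission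
  imports Defs "HOL-Combinatorics.Permutations"
begin

lemma relpowp_sym:
  assumes "symp Adj" and "(Adj ^^ n) x y"
  shows "(Adj ^^ n) y x"
  using assms(2)
proof (induction n arbitrary: y)
  case 0
  then show ?case by (auto elim: relpowp_0_E)
next
  case (Suc n)
  then obtain u where "(Adj ^^ n) x u" and "Adj u y"
    by (auto elim: relpowp_Suc_E)
  then show ?case
    using Suc.IH assms(1) by (metis relpowp_Suc_I2 sympD)
qed

lemma gdist_sym: "symp Adj \<Longrightarrow> gdist Adj x y = gdist Adj y x"
  unfolding gdist_def by (metis relpowp_sym)

lemma gdist_le: "(Adj ^^ n) x y \<Longrightarrow> gdist Adj x y \<le> n"
  unfolding gdist_def by (rule Least_le)

lemma relpowp_gdist: "\<exists>n. (Adj ^^ n) x y \<Longrightarrow> (Adj ^^ gdist Adj x y) x y"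
  unfolding gdist_def by (rule LeastI_ex)

lemma gdist_eq_0_iff: "\<exists>n. (Adj ^^ n) x y \<Longrightarrow> gdist Adj x y = 0 \<longleftrightarrow> x = y"
  using relpowp_gdist[of Adj x y] gdist_le[of 0 Adj x y] by (auto elim: relpowp_0_E)

lemma gdist_eq_1_iff:
  assumes "irreflp Adj" and "\<exists>n. (Adj ^^ n) x y"
  shows "gdist Adj x y = 1 \<longleftrightarrow> Adj x y"
proof
  assume "gdist Adj x y = 1"
  then show "Adj x y" using relpowp_gdist[OF assms(2)] by (metis relpowp_1)
next
  assume "Adj x y"
  then have "gdist Adj x y \<le> 1" using gdist_le[of 1 Adj x y] by (metis relpowp_1)
  moreover have "x \<noteq> y" using \<open>Adj x y\<close> assms(1) by (auto simp: irreflp_def)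
  ultimately show "gdist Adj x y = 1" using gdist_eq_0_iff[OF assms(2)] by linarith
qed

lemma gdist_adj_le:
  assumes "Adj z x" and "\<exists>n. (Adj ^^ n) x y"
  shows "gdist Adj z y \<le> Suc (gdist Adj x y)"
  using gdist_le relpowp_Suc_I2[OF assms(1) relpowp_gdist[OF assms(2)]] .

section \<open>Fixed-point-free involutions\<close>

lemma involution_transpose_comp:
  assumes p: "p permutes A" and involutive: "\<And>z. z \<in> A \<Longrightarrow> p (p z) = z" and x: "x \<in> A"
  shows "transpose x (p x) \<circ> p permutes A - {x, p x}"
    and "z \<in> A - {x, p x} \<Longrightarrow> (transpose x (p x) \<circ> p) z = p z \<and> p z \<in> A - {x, p x}"
proof -
  show "(transpose x (p x) \<circ> p) z = p z \<and> p z \<in> A - {x, p x}" if "z \<in> A - {x, p x}"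
  proof -
    have z: "z \<in> A" "z \<noteq> x" "z \<noteq> p x" using that by auto
    have "p z \<noteq> x" using involutive[OF z(1)] z(3) by auto
    moreover have "p z \<noteq> p x" using involutive[OF z(1)] involutive[OF x] z(2) by metis
    ultimately show ?thesis using z(1) permutes_in_image[OF p] by auto
  qed
  show "transpose x (p x) \<circ> p permutes A - {x, p x}"
  proof (rule permutes_superset)
    show "transpose x (p x) \<circ> p permutes A"
      by (rule permutes_compose[OF p permutes_swap_id[OF x]]) (simp add: permutes_in_image[OF p] x)
    show "(transpose x (p x) \<circ> p) z = z" if "z \<in> A - (A - {x, p x})" for z
      using that involutive[OF x] by auto
  qed
qed

lemma fixpoint_free_involution_card_sign:
  assumes "p permutes A" and "finite A"
    and "\<And>x. x \<in> A \<Longrightarrow> p (p x) = x" and "\<And>x. x \<in> A \<Longrightarrow> p x \<noteq> x"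
  shows "even (card A) \<and> sign p = (-1) ^ (card A div 2)"
  using assms
proof (induction "card A" arbitrary: A p rule: less_induct)
  case less
  show ?case
  proof (cases "A = {}")
    case True
    then show ?thesis using less.prems(1) by simp
  next
    case False
    then obtain x where x: "x \<in> A" by blast
    define y where "y = p x"
    define A' where "A' = A - {x, y}"
    define q where "q = transpose x y \<circ> p"
    have y: "y \<in> A" "y \<noteq> x"
      using x less.prems(4)[OF x] permutes_in_image[OF less.prems(1)] by (auto simp: y_def)
    have A': "A' \<subseteq> A" "finite A'" using less.prems(2) by (auto simp: A'_def)
    have q_permutes: "q permutes A'"
      using involution_transpose_comp(1)[OF less.prems(1,3) x] by (simp add: A'_def q_def y_def)
    have q_apply: "q z = p z" "p z \<in> A'" if "z \<in> A'" for z
      using involution_transpose_comp(2)[OF less.prems(1,3) x, of z] that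
      by (simp_all add: A'_def q_def y_def)
    have card_A: "card A = Suc (Suc (card A'))"
    proof -
      have "A' = (A - {x}) - {y}" by (auto simp: A'_def)
      then show ?thesis
        using card_Suc_Diff1[OF less.prems(2) x] card_Suc_Diff1[of "A - {x}" y] less.prems(2) y
        by simp
    qed
    have IH: "even (card A') \<and> sign q = (-1) ^ (card A' div 2)"
    proof (rule less.hyps)
      show "card A' < card A" using card_A by simp
      show "q (q z) = z" "q z \<noteq> z" if "z \<in> A'" for z
      proof -
        have z: "z \<in> A" using that A'(1) by blast
        have "q (q z) = p (p z)" using q_apply[OF that] q_apply(1)[OF q_apply(2)[OF that]] by simp
        then show "q (q z) = z" using less.prems(3)[OF z] by simp
        show "q z \<noteq> z" using q_apply(1)[OF that] less.prems(4)[OF z] by simp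
      qed
    qed (use q_permutes A'(2) in auto)
    have "transpose x y \<circ> q = p"
      by (simp add: q_def fun_eq_iff)
    moreover have "sign (transpose x y \<circ> q) = - sign q"
      using sign_compose[OF permutation_swap_id permutes_imp_permutation[OF A'(2) q_permutes]] y(2)
      by (simp add: sign_swap_id)
    ultimately have "sign p = - sign q" by simp
    moreover have "card A div 2 = Suc (card A' div 2)" using card_A by simp
    ultimately show ?thesis using IH card_A by simp
  qed
qed

definition left_translation :: "('a, 'b) monoid_scheme \<Rightarrow> 'a \<Rightarrow> 'a \<Rightarrow> 'a" where
  "left_translation G h x = (if x \<in> carrier G then h \<otimes>\<^bsub>G\<^esub> x else x)"

context group
begin

lemma left_translation_permutes:
  assumes "h \<in> carrier G"
  shows "left_translation G h permutes carrier G"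
proof (rule bij_imp_permutes)
  show "bij_betw (left_translation G h) (carrier G) (carrier G)"
    by (rule bij_betw_byWitness[where f' = "left_translation G (inv h)"])
      (use assms in \<open>auto simp: left_translation_def m_assoc [symmetric]\<close>)
qed (simp add: left_translation_def)

lemma left_translation_mult:
  "h \<in> carrier G \<Longrightarrow> h' \<in> carrier G \<Longrightarrow>
    left_translation G (h \<otimes> h') = left_translation G h \<circ> left_translation G h'"
  by (auto simp: left_translation_def m_assoc fun_eq_iff)

lemma sign_left_translation_mult:
  assumes "finite (carrier G)" and "h \<in> carrier G" and "h' \<in> carrier G"
  shows "sign (left_translation G (h \<otimes> h')) =
    sign (left_translation G h) * sign (left_translation G h')"
  using sign_compose[OF permutes_imp_permutation[OF assms(1) left_translation_permutes[OF assms(2)]]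
      permutes_imp_permutation[OF assms(1) left_translation_permutes[OF assms(3)]]]
  by (simp add: left_translation_mult[OF assms(2,3)])

lemma sign_left_translation_involution:
  assumes "finite (carrier G)" and "t \<in> carrier G" and "t \<noteq> \<one>" and "t \<otimes> t = \<one>"
  shows "sign (left_translation G t) = (-1) ^ (order G div 2)"
proof -
  have "left_translation G t (left_translation G t x) = x" if "x \<in> carrier G" for x
    using assms(2,4) that by (simp add: left_translation_def m_assoc [symmetric])
  moreover have "left_translation G t x \<noteq> x" if "x \<in> carrier G" for x
    using assms(2,3) that by (simp add: left_translation_def)
  ultimately show ?thesis
    using fixpoint_free_involution_card_sign[OF left_translation_permutes[OF assms(2)] assms(1)]
    by (simp add: order_def)
qed

lemma exists_involution_if_even_order:
  assumes "finite (carrier G)" and "even (order G)"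
  obtains t where "t \<in> carrier G" and "t \<noteq> \<one>" and "t \<otimes> t = \<one>"
proof -
  have "order G = 2 ^ 1 * (order G div 2)" using assms(2) by simp
  then obtain Q where Q: "subgroup Q G" "card Q = 2"
    using sylow_thm[of 2 G 1 "order G div 2"] is_group assms(1) by auto
  then obtain t where t: "Q = {\<one>, t}" "t \<noteq> \<one>"
    using subgroup.one_closed[OF Q(1)] by (auto simp: card_2_iff doubleton_eq_iff)
  have t_carrier: "t \<in> carrier G" using subgroup.subset[OF Q(1)] t(1) by blast
  have "t \<otimes> t \<in> Q" using subgroup.m_closed[OF Q(1)] t(1) by blast
  moreover have "t \<otimes> t \<noteq> t" using t(2) t_carrier by simp
  ultimately have "t \<otimes> t = \<one>" using t(1) by blast
  then show thesis using that t(2) t_carrier by blast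
qed

end

section \<open>Subgroups of index two\<close>

(* H = carrier G is not excluded; any element outside H makes the index exactly two. *)
locale index_two_subgroup = group G for G (structure) +
  fixes H :: "'a set"
  assumes subgroup_H: "subgroup H G"
    and outside_mult: "x \<in> carrier G - H \<Longrightarrow> y \<in> carrier G - H \<Longrightarrow> x \<otimes> y \<in> H"
begin

lemma H_carrier: "h \<in> H \<Longrightarrow> h \<in> carrier G"
  using subgroup.subset[OF subgroup_H] by blast

lemma inv_outside: "x \<in> carrier G - H \<Longrightarrow> inv x \<in> carrier G - H"
  using subgroup.m_inv_closed[OF subgroup_H, of "inv x"] by auto

lemma mult_inside_outside: "h \<in> H \<Longrightarrow> x \<in> carrier G - H \<Longrightarrow> h \<otimes> x \<in> carrier G - H"
  using subgroup.m_closed[OF subgroup_H subgroup.m_inv_closed[OF subgroup_H], of h "h \<otimes> x"]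
  by (auto simp: H_carrier m_assoc [symmetric])

lemma mult_outside_inside: "x \<in> carrier G - H \<Longrightarrow> h \<in> H \<Longrightarrow> x \<otimes> h \<in> carrier G - H"
  using subgroup.m_closed[OF subgroup_H _ subgroup.m_inv_closed[OF subgroup_H], of "x \<otimes> h" h]
  by (auto simp: H_carrier m_assoc)

lemma outside_div: "x \<in> carrier G - H \<Longrightarrow> y \<in> carrier G - H \<Longrightarrow> x \<otimes> inv y \<in> H"
  using outside_mult inv_outside by blast

lemma card_outside:
  assumes "finite (carrier G)" and "a \<in> carrier G - H"
  shows "card (carrier G - H) = card H"
proof -
  have "bij_betw (\<lambda>h. a \<otimes> h) H (carrier G - H)"
  proof (rule bij_betw_byWitness[where f' = "\<lambda>x. inv a \<otimes> x"])
    show "(\<lambda>h. a \<otimes> h) ` H \<subseteq> carrier G - H"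
      using mult_outside_inside assms(2) by blast
    show "(\<lambda>x. inv a \<otimes> x) ` (carrier G - H) \<subseteq> H"
      using outside_mult inv_outside assms(2) by blast
  qed (use assms(2) in \<open>auto simp: H_carrier m_assoc [symmetric]\<close>)
  then show ?thesis by (simp add: bij_betw_same_card)
qed

lemma involution_outside_if_square_in_odd_subgroup:
  assumes K: "subgroup K G" "K \<subseteq> H" "finite K" "odd (card K)"
    and a: "a \<in> carrier G - H" "a \<otimes> a \<in> K"
  shows "\<exists>b\<in>carrier G - H. b \<otimes> b = \<one>"
proof -
  interpret K: group "G\<lparr>carrier := K\<rparr>"
    by (rule subgroup.subgroup_is_group[OF K(1) is_group])
  have a_carrier: "a \<in> carrier G" using a(1) by blast
  have square_pow: "a [^] (2 * n) = (a \<otimes> a) [^] n" for n :: nat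
    using nat_pow_pow[OF a_carrier, of 2 n] a_carrier by (simp add: numeral_2_eq_2)
  obtain j where j: "card K = Suc (2 * j)" using K(4) by (metis oddE Suc_eq_plus1)
  (* the witness is the odd power a^|K|, whose square (a^2)^|K| is 1 *)
  have "(a \<otimes> a) [^] card K = \<one>"
    using K.pow_order_eq_1[of "a \<otimes> a"] a(2) by (simp add: order_def nat_pow_consistent [symmetric])
  then have "a [^] card K \<otimes> a [^] card K = \<one>"
    using a_carrier by (simp add: nat_pow_mult square_pow [symmetric] mult_2)
  moreover have "(a \<otimes> a) [^] j \<in> K"
    using K.nat_pow_closed[of "a \<otimes> a" j] a(2) by (simp add: nat_pow_consistent [symmetric])
  then have "a [^] card K \<in> carrier G - H"
    using mult_inside_outside[OF _ a(1)] K(2) j square_pow by auto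
  ultimately show ?thesis by blast
qed

end

lemma (in group) index_two_subgroup_sign_kernel:
  assumes "finite (carrier G)"
  shows "index_two_subgroup G {h \<in> carrier G. sign (left_translation G h) = 1}"
proof -
  let ?K = "{h \<in> carrier G. sign (left_translation G h) = 1}"
  have mult: "sign (left_translation G (h \<otimes> h')) =
      sign (left_translation G h) * sign (left_translation G h')"
    if "h \<in> carrier G" "h' \<in> carrier G" for h h'
    using sign_left_translation_mult[OF assms that] .
  have plus_minus_one: "sign (left_translation G h) = 1 \<or> sign (left_translation G h) = -1" for h
    by (cases "left_translation G h" rule: sign_cases) auto
  have one: "sign (left_translation G \<one>) = 1"
    using mult[of \<one> \<one>] plus_minus_one[of \<one>] by auto
  have "subgroup ?K G"
  proof (rule subgroupI)
    show "?K \<subseteq> carrier G" and "?K \<noteq> {}" using one by auto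
    show "inv h \<in> ?K" if "h \<in> ?K" for h
    proof -
      have "sign (left_translation G (inv h)) * sign (left_translation G h) = 1"
        using that mult[of "inv h" h] one by simp
      then show ?thesis using that by simp
    qed
    show "h \<otimes> h' \<in> ?K" if "h \<in> ?K" "h' \<in> ?K" for h h'
      using that mult[of h h'] by simp
  qed
  moreover have "x \<otimes> y \<in> ?K" if "x \<in> carrier G - ?K" "y \<in> carrier G - ?K" for x y
  proof -
    have "sign (left_translation G x) = -1" "sign (left_translation G y) = -1"
      using that plus_minus_one by blast+
    then show ?thesis using that mult[of x y] by simp
  qed
  ultimately show ?thesis
    by (simp add: index_two_subgroup_def index_two_subgroup_axioms_def is_group)
qed

lemma (in group) index_two_subgroup_if_order_twice_odd:
  assumes "finite (carrier G)" and "order G = 2 * m" and "odd m"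
  obtains K where "index_two_subgroup G K" and "card K = m"
proof -
  let ?K = "{h \<in> carrier G. sign (left_translation G h) = 1}"
  have K: "index_two_subgroup G ?K" by (rule index_two_subgroup_sign_kernel[OF assms(1)])
  obtain t where t: "t \<in> carrier G" "t \<noteq> \<one>" "t \<otimes> t = \<one>"
    using exists_involution_if_even_order assms(1,2) by auto
  have "sign (left_translation G t) = (-1) ^ m"
    using sign_left_translation_involution[OF assms(1) t] assms(2) by simp
  then have "t \<in> carrier G - ?K" using t(1) assms(3) by simp
  then have "card (carrier G - ?K) = card ?K"
    by (rule index_two_subgroup.card_outside[OF K assms(1)])
  moreover have "card (carrier G - ?K) = order G - card ?K"
    unfolding order_def by (rule card_Diff_subset) (use assms(1) in auto)
  ultimately have "card ?K = m" using assms(2) by linarith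
  then show thesis by (rule that[OF K])
qed

section \<open>Semidirect products with \<open>\<int>\<^sub>2\<close>\<close>

lemma semidirect_Z2_carrier [simp]: "carrier (semidirect_Z2 H \<phi>) = carrier H \<times> UNIV"
  by (simp add: semidirect_Z2_def)

lemma semidirect_Z2_mult [simp]:
  "(h, a) \<otimes>\<^bsub>semidirect_Z2 H \<phi>\<^esub> (h', b) = (h \<otimes>\<^bsub>H\<^esub> (if a then \<phi> h' else h'), a \<noteq> b)"
  by (simp add: semidirect_Z2_def)

lemma semidirect_Z2_one [simp]: "\<one>\<^bsub>semidirect_Z2 H \<phi>\<^esub> = (\<one>\<^bsub>H\<^esub>, False)"
  by (simp add: semidirect_Z2_def)

context group
begin

lemma involutive_hom_in_iso:
  assumes "\<phi> \<in> hom G G" and "\<forall>x\<in>carrier G. \<phi> (\<phi> x) = x"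
  shows "\<phi> \<in> iso G G"
proof -
  have "bij_betw \<phi> (carrier G) (carrier G)"
    by (rule bij_betw_byWitness[where f' = \<phi>]) (use assms in \<open>auto simp: hom_def\<close>)
  then show ?thesis using assms(1) by (simp add: iso_def)
qed

lemma group_semidirect_Z2:
  assumes "\<phi> \<in> hom G G" and "\<forall>x\<in>carrier G. \<phi> (\<phi> x) = x"
  shows "group (semidirect_Z2 G \<phi>)"
proof -
  interpret \<phi>: group_hom G G \<phi>
    by (intro group_hom.intro group_hom_axioms.intro is_group assms(1))
  show ?thesis
  proof (rule groupI)
    show "p \<otimes>\<^bsub>semidirect_Z2 G \<phi>\<^esub> q \<in> carrier (semidirect_Z2 G \<phi>)"
      if "p \<in> carrier (semidirect_Z2 G \<phi>)" "q \<in> carrier (semidirect_Z2 G \<phi>)" for p q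
      using that by (cases p; cases q) auto
    show "p \<otimes>\<^bsub>semidirect_Z2 G \<phi>\<^esub> q \<otimes>\<^bsub>semidirect_Z2 G \<phi>\<^esub> r =
        p \<otimes>\<^bsub>semidirect_Z2 G \<phi>\<^esub> (q \<otimes>\<^bsub>semidirect_Z2 G \<phi>\<^esub> r)"
      if "p \<in> carrier (semidirect_Z2 G \<phi>)" "q \<in> carrier (semidirect_Z2 G \<phi>)"
        "r \<in> carrier (semidirect_Z2 G \<phi>)" for p q r
      using that assms(2)
      by (cases p; cases q; cases r) (auto simp: m_assoc)
    show "\<exists>q\<in>carrier (semidirect_Z2 G \<phi>). q \<otimes>\<^bsub>semidirect_Z2 G \<phi>\<^esub> p = \<one>\<^bsub>semidirect_Z2 G \<phi>\<^esub>"
      if "p \<in> carrier (semidirect_Z2 G \<phi>)" for p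
    proof (cases p)
      case (Pair h a)
      then show ?thesis
        using that by (intro bexI[where x = "(if a then inv (\<phi> h) else inv h, a)"]) auto
    qed
  qed auto
qed

lemma semidirect_Z2_inv:
  assumes "\<phi> \<in> hom G G" and "\<forall>x\<in>carrier G. \<phi> (\<phi> x) = x" and "h \<in> carrier G"
  shows "inv\<^bsub>semidirect_Z2 G \<phi>\<^esub> (h, a) = (if a then inv (\<phi> h) else inv h, a)"
proof -
  interpret \<phi>: group_hom G G \<phi>
    by (intro group_hom.intro group_hom_axioms.intro is_group assms(1))
  interpret SD: group "semidirect_Z2 G \<phi>"
    by (rule group_semidirect_Z2[OF assms(1,2)])
  show ?thesis
    by (rule SD.inv_equality) (use assms(3) in auto)
qed

end

definition cayley_semidirect_Z2_model ::
  "('a, 'b) monoid_scheme \<Rightarrow> 'a set \<Rightarrow> 'a set \<Rightarrow> ('a \<Rightarrow> 'a) \<Rightarrow> ('a \<times> bool) set \<Rightarrow> bool" where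
  "cayley_semidirect_Z2_model G S H \<phi> T \<longleftrightarrow>
     \<phi> \<in> iso (G\<lparr>carrier := H\<rparr>) (G\<lparr>carrier := H\<rparr>) \<and> (\<forall>h\<in>H. \<phi> (\<phi> h) = h) \<and>
     T \<subseteq> carrier (semidirect_Z2 (G\<lparr>carrier := H\<rparr>) \<phi>) - {\<one>\<^bsub>semidirect_Z2 (G\<lparr>carrier := H\<rparr>) \<phi>\<^esub>} \<and>
     (\<forall>t\<in>T. inv\<^bsub>semidirect_Z2 (G\<lparr>carrier := H\<rparr>) \<phi>\<^esub> t \<in> T) \<and>
     graph_iso (carrier G) (cay_adj G S)
       (carrier (semidirect_Z2 (G\<lparr>carrier := H\<rparr>) \<phi>)) (cay_adj (semidirect_Z2 (G\<lparr>carrier := H\<rparr>) \<phi>) T)"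

locale semidirect_Z2_model = index_two_subgroup G H for G (structure) and H +
  fixes S :: "'a set" and a :: 'a and \<phi> :: "'a \<Rightarrow> 'a"
  assumes S_outside: "S \<subseteq> carrier G - H" and S_inv: "\<forall>s\<in>S. inv s \<in> S"
    and a_outside: "a \<in> carrier G - H"
    and \<phi>_hom: "\<phi> \<in> hom (G\<lparr>carrier := H\<rparr>) (G\<lparr>carrier := H\<rparr>)"
    and \<phi>_involutive: "\<forall>h\<in>H. \<phi> (\<phi> h) = h"
    and twist: "u \<in> carrier G - H \<Longrightarrow> \<phi> (inv a \<otimes> u) \<otimes> inv a \<in> S \<longleftrightarrow> u \<in> S"
begin

abbreviation SD :: "('a \<times> bool) monoid" where
  "SD \<equiv> semidirect_Z2 (G\<lparr>carrier := H\<rparr>) \<phi>"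

definition T :: "('a \<times> bool) set" where
  "T = {h \<in> H. h \<otimes> inv a \<in> S} \<times> {True}"

definition embed :: "'a \<Rightarrow> 'a \<times> bool" where
  "embed g = (if g \<in> H then (g, False) else (\<phi> (inv a \<otimes> g), True))"

lemma H_group: "group (G\<lparr>carrier := H\<rparr>)"
  by (rule subgroup.subgroup_is_group[OF subgroup_H is_group])

lemma \<phi>_closed: "h \<in> H \<Longrightarrow> \<phi> h \<in> H"
  using \<phi>_hom by (auto simp: hom_def)

lemma \<phi>_mult: "h \<in> H \<Longrightarrow> h' \<in> H \<Longrightarrow> \<phi> (h \<otimes> h') = \<phi> h \<otimes> \<phi> h'"
  using \<phi>_hom by (simp add: hom_def)

lemma \<phi>_inv: "h \<in> H \<Longrightarrow> \<phi> (inv h) = inv (\<phi> h)"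
  using group_hom.hom_inv[of "G\<lparr>carrier := H\<rparr>" "G\<lparr>carrier := H\<rparr>" \<phi> h] H_group \<phi>_hom
  by (simp add: group_hom_def group_hom_axioms_def subgroup_H \<phi>_closed)

lemma SD_inv: "h \<in> H \<Longrightarrow> inv\<^bsub>SD\<^esub> (h, b) = (if b then inv (\<phi> h) else inv h, b)"
  using group.semidirect_Z2_inv[OF H_group \<phi>_hom, of h b] \<phi>_involutive
  by (simp add: subgroup_H \<phi>_closed)

lemma a_carrier: "a \<in> carrier G"
  using a_outside by blast

lemma inv_a_mult: "g \<in> carrier G - H \<Longrightarrow> inv a \<otimes> g \<in> H"
  using outside_mult[OF inv_outside[OF a_outside]] by blast

lemma embed_bij: "bij_betw embed (carrier G) (carrier SD)"
proof (rule bij_betw_byWitness[where f' = "\<lambda>(h, b). if b then a \<otimes> \<phi> h else h"])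
  note a = a_carrier
  show "\<forall>g\<in>carrier G. (\<lambda>(h, b). if b then a \<otimes> \<phi> h else h) (embed g) = g"
    using inv_a_mult a \<phi>_involutive by (auto simp: embed_def m_assoc [symmetric])
  show "\<forall>p\<in>carrier SD. embed ((\<lambda>(h, b). if b then a \<otimes> \<phi> h else h) p) = p"
    using mult_outside_inside[OF a_outside \<phi>_closed] \<phi>_involutive H_carrier \<phi>_closed a
    by (auto simp: embed_def m_assoc [symmetric])
  show "embed ` carrier G \<subseteq> carrier SD"
    using inv_a_mult \<phi>_closed by (auto simp: embed_def)
  show "(\<lambda>(h, b). if b then a \<otimes> \<phi> h else h) ` carrier SD \<subseteq> carrier G"
    using a H_carrier \<phi>_closed by auto
qed

lemma T_subset: "T \<subseteq> carrier SD - {\<one>\<^bsub>SD\<^esub>}"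
  by (auto simp: T_def)

lemma T_inv: "t \<in> T \<Longrightarrow> inv\<^bsub>SD\<^esub> t \<in> T"
proof -
  assume "t \<in> T"
  then obtain h where h: "t = (h, True)" "h \<in> H" "h \<otimes> inv a \<in> S" by (auto simp: T_def)
  note a = a_carrier
  have u: "a \<otimes> inv h \<in> carrier G - H"
    using mult_outside_inside[OF a_outside] subgroup.m_inv_closed[OF subgroup_H h(2)] by blast
  have "inv (h \<otimes> inv a) = a \<otimes> inv h" using a H_carrier[OF h(2)] by (simp add: inv_mult_group)
  then have "a \<otimes> inv h \<in> S" using S_inv h(3) by metis
  then have "\<phi> (inv h) \<otimes> inv a \<in> S"
    using twist[OF u] a H_carrier[OF h(2)] by (simp add: m_assoc [symmetric])
  then show "inv\<^bsub>SD\<^esub> t \<in> T"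
    using h SD_inv \<phi>_inv \<phi>_closed subgroup.m_inv_closed[OF subgroup_H] by (simp add: T_def)
qed

lemma embed_cases:
  assumes "g \<in> carrier G"
  obtains h where "embed g = (h, g \<notin> H)" and "h \<in> H"
  using assms inv_a_mult \<phi>_closed unfolding embed_def by (cases "g \<in> H") auto

lemma snd_embed_div:
  assumes "x \<in> carrier G" and "y \<in> carrier G"
  shows "snd (embed x \<otimes>\<^bsub>SD\<^esub> inv\<^bsub>SD\<^esub> embed y) \<longleftrightarrow> (x \<in> H \<longleftrightarrow> y \<notin> H)"
proof -
  obtain h where "embed x = (h, x \<notin> H)" using embed_cases[OF assms(1)] by blast
  moreover obtain h' where "embed y = (h', y \<notin> H)" and "h' \<in> H"
    using embed_cases[OF assms(2)] by blast
  ultimately show ?thesis by (simp add: SD_inv)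
qed

lemma embed_div_inside_outside:
  assumes x: "x \<in> H" and y: "y \<in> carrier G - H"
  shows "embed x \<otimes>\<^bsub>SD\<^esub> inv\<^bsub>SD\<^esub> embed y = (x \<otimes> inv y \<otimes> a, True)"
proof -
  have "\<phi> (inv a \<otimes> y) \<in> H" using \<phi>_closed inv_a_mult[OF y] by blast
  then have "inv\<^bsub>SD\<^esub> (embed y) = (inv (\<phi> (\<phi> (inv a \<otimes> y))), True)"
    using y SD_inv by (simp add: embed_def)
  also have "inv (\<phi> (\<phi> (inv a \<otimes> y))) = inv y \<otimes> a"
    using \<phi>_involutive inv_a_mult[OF y] y a_carrier by (simp add: inv_mult_group)
  finally have "inv\<^bsub>SD\<^esub> (embed y) = (inv y \<otimes> a, True)" .
  moreover have "embed x = (x, False)" using x by (simp add: embed_def)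
  ultimately show ?thesis using y a_carrier H_carrier[OF x] by (simp add: m_assoc)
qed

lemma embed_div_outside_inside:
  assumes x: "x \<in> carrier G - H" and y: "y \<in> H"
  shows "embed x \<otimes>\<^bsub>SD\<^esub> inv\<^bsub>SD\<^esub> embed y = (\<phi> (inv a \<otimes> (x \<otimes> inv y)), True)"
proof -
  have "\<phi> (inv a \<otimes> x) \<otimes> \<phi> (inv y) = \<phi> ((inv a \<otimes> x) \<otimes> inv y)"
    using \<phi>_mult inv_a_mult[OF x] subgroup.m_inv_closed[OF subgroup_H y] by simp
  also have "(inv a \<otimes> x) \<otimes> inv y = inv a \<otimes> (x \<otimes> inv y)"
    using a_carrier x H_carrier[OF y] by (simp add: m_assoc)
  finally have "\<phi> (inv a \<otimes> x) \<otimes> \<phi> (inv y) = \<phi> (inv a \<otimes> (x \<otimes> inv y))" .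
  moreover have "embed x = (\<phi> (inv a \<otimes> x), True)" using x by (simp add: embed_def)
  moreover have "inv\<^bsub>SD\<^esub> (embed y) = (inv y, False)" using y SD_inv by (simp add: embed_def)
  ultimately show ?thesis by simp
qed

lemma embed_adj:
  assumes x: "x \<in> carrier G" and y: "y \<in> carrier G"
  shows "cay_adj G S x y \<longleftrightarrow> cay_adj SD T (embed x) (embed y)"
proof -
  have "embed x \<in> carrier SD" "embed y \<in> carrier SD"
    using embed_bij x y by (auto dest: bij_betw_apply)
  then have "cay_adj SD T (embed x) (embed y) \<longleftrightarrow> embed x \<otimes>\<^bsub>SD\<^esub> inv\<^bsub>SD\<^esub> embed y \<in> T"
    by (simp add: cay_adj_def)
  also have "\<dots> \<longleftrightarrow> x \<otimes> inv y \<in> S"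
  proof (cases "x \<in> H \<longleftrightarrow> y \<in> H")
    case True
    then have "x \<otimes> inv y \<in> H"
      using x y outside_div subgroup.m_closed[OF subgroup_H _ subgroup.m_inv_closed[OF subgroup_H]]
      by blast
    then show ?thesis
      using snd_embed_div[OF x y] True S_outside by (auto simp: T_def)
  next
    case False
    show ?thesis
    proof (cases "x \<in> H")
      case True
      then have y': "y \<in> carrier G - H" using False y by blast
      then have "x \<otimes> inv y \<otimes> a \<in> H"
        using outside_mult[OF mult_inside_outside[OF True inv_outside[OF y']] a_outside] by simp
      then show ?thesis
        using embed_div_inside_outside[OF True y'] a_carrier H_carrier[OF True] y
        by (simp add: T_def m_assoc)
    next
      case x_outside: False
      then have x': "x \<in> carrier G - H" and y': "y \<in> H" using False x by auto
      have u: "x \<otimes> inv y \<in> carrier G - H"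
        using mult_outside_inside[OF x' subgroup.m_inv_closed[OF subgroup_H y']] .
      then show ?thesis
        using embed_div_outside_inside[OF x' y'] twist[OF u] \<phi>_closed inv_a_mult[OF u]
        by (simp add: T_def)
    qed
  qed
  also have "\<dots> \<longleftrightarrow> cay_adj G S x y"
    using x y by (simp add: cay_adj_def)
  finally show ?thesis by simp
qed

theorem cayley_model: "cayley_semidirect_Z2_model G S H \<phi> T"
proof -
  have "\<phi> \<in> iso (G\<lparr>carrier := H\<rparr>) (G\<lparr>carrier := H\<rparr>)"
    using group.involutive_hom_in_iso[OF H_group \<phi>_hom] \<phi>_involutive by simp
  moreover have "graph_iso (carrier G) (cay_adj G S) (carrier SD) (cay_adj SD T)"
    unfolding graph_iso_def using embed_bij embed_adj by blast
  ultimately show ?thesis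
    using \<phi>_involutive T_subset T_inv by (simp add: cayley_semidirect_Z2_model_def)
qed

end

context index_two_subgroup
begin

lemma cayley_model_of_involution:
  assumes "S \<subseteq> carrier G - H" and "\<forall>s\<in>S. inv s \<in> S"
    and b: "b \<in> carrier G - H" "b \<otimes> b = \<one>"
  shows "\<exists>\<phi> T. cayley_semidirect_Z2_model G S H \<phi> T"
proof -
  have b_carrier: "b \<in> carrier G" and inv_b: "inv b = b"
    using b inv_equality[of b b] by auto
  have bb: "b \<otimes> (b \<otimes> x) = x" if "x \<in> carrier G" for x
    using that b_carrier b(2) by (simp add: m_assoc [symmetric])
  define \<phi> where "\<phi> h = b \<otimes> h \<otimes> b" for h
  have "semidirect_Z2_model G H S b \<phi>"
  proof (intro semidirect_Z2_model.intro semidirect_Z2_model_axioms.intro)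
    show "index_two_subgroup G H"
      by (rule index_two_subgroup_axioms)
    show "\<phi> \<in> hom (G\<lparr>carrier := H\<rparr>) (G\<lparr>carrier := H\<rparr>)"
    proof (rule homI)
      show "\<phi> h \<in> carrier (G\<lparr>carrier := H\<rparr>)" if "h \<in> carrier (G\<lparr>carrier := H\<rparr>)" for h
        using outside_mult[OF mult_outside_inside[OF b(1)] b(1)] that by (simp add: \<phi>_def)
      show "\<phi> (h \<otimes>\<^bsub>G\<lparr>carrier := H\<rparr>\<^esub> h') = \<phi> h \<otimes>\<^bsub>G\<lparr>carrier := H\<rparr>\<^esub> \<phi> h'"
        if "h \<in> carrier (G\<lparr>carrier := H\<rparr>)" "h' \<in> carrier (G\<lparr>carrier := H\<rparr>)" for h h'
        using that H_carrier b_carrier bb by (simp add: \<phi>_def m_assoc)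
    qed
    show "\<forall>h\<in>H. \<phi> (\<phi> h) = h"
      using H_carrier b_carrier bb b(2) by (simp add: \<phi>_def m_assoc)
    show "\<phi> (inv b \<otimes> u) \<otimes> inv b \<in> S \<longleftrightarrow> u \<in> S" if "u \<in> carrier G - H" for u
      using that b_carrier bb b(2) by (simp add: \<phi>_def inv_b m_assoc)
  qed (use assms in auto)
  then have "cayley_semidirect_Z2_model G S H \<phi> (semidirect_Z2_model.T G H S b)"
    by (rule semidirect_Z2_model.cayley_model)
  then show ?thesis by blast
qed

lemma cayley_model_of_abelian:
  assumes S: "S \<subseteq> carrier G - H" "\<forall>s\<in>S. inv s \<in> S"
    and "a \<in> S" and comm: "comm_group (G\<lparr>carrier := H\<rparr>)"
  shows "\<exists>\<phi> T. cayley_semidirect_Z2_model G S H \<phi> T"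
proof -
  have a: "a \<in> carrier G - H" using assms(1,3) by blast
  have H_comm: "h \<otimes> h' = h' \<otimes> h" if "h \<in> H" "h' \<in> H" for h h'
    using comm_monoid.m_comm[of "G\<lparr>carrier := H\<rparr>" h h'] comm that
    by (simp add: comm_group_def)
  have "semidirect_Z2_model G H S a (\<lambda>h. inv h)"
  proof (intro semidirect_Z2_model.intro semidirect_Z2_model_axioms.intro)
    show "index_two_subgroup G H"
      by (rule index_two_subgroup_axioms)
    show "(\<lambda>h. inv h) \<in> hom (G\<lparr>carrier := H\<rparr>) (G\<lparr>carrier := H\<rparr>)"
      using subgroup.m_inv_closed[OF subgroup_H] H_comm subgroup.m_inv_closed[OF subgroup_H]
      by (intro homI) (auto simp: inv_mult_group H_carrier)
    show "inv (inv a \<otimes> u) \<otimes> inv a \<in> S \<longleftrightarrow> u \<in> S" if "u \<in> carrier G - H" for u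
    proof -
      have "inv (inv a \<otimes> u) \<otimes> inv a = inv u"
        using that a by (simp add: inv_mult_group m_assoc)
      then show ?thesis using S(2) that by (metis inv_inv DiffD1)
    qed
  qed (use assms a H_carrier in auto)
  then have "cayley_semidirect_Z2_model G S H (\<lambda>h. inv h) (semidirect_Z2_model.T G H S a)"
    by (rule semidirect_Z2_model.cayley_model)
  then show ?thesis by blast
qed

end

section \<open>Distance-regular Cayley graphs with intersection array \<open>{k, k - 1, k - \<mu>; 1, \<mu>, k}\<close>\<close>

locale dr_cayley_graph = group G for G (structure) +
  fixes S :: "'a set" and k \<mu> :: nat
  assumes S_subset: "S \<subseteq> carrier G - {\<one>}" and S_inv: "\<forall>s\<in>S. inv s \<in> S"
    and drg: "distance_regular (carrier G) (cay_adj G S) [k, k - 1, k - \<mu>] [1, \<mu>, k]"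
begin

abbreviation Adj :: "'a \<Rightarrow> 'a \<Rightarrow> bool" where
  "Adj \<equiv> cay_adj G S"

lemma finite_carrier: "finite (carrier G)"
  using drg by (simp add: distance_regular_def)

lemma S_carrier: "S \<subseteq> carrier G"
  using S_subset by blast

lemma finite_S: "finite S"
  using finite_subset[OF S_carrier finite_carrier] .

lemma adj_carrier: "Adj x y \<Longrightarrow> x \<in> carrier G \<and> y \<in> carrier G"
  by (simp add: cay_adj_def)

lemma adj_symp: "symp Adj"
proof (rule sympI)
  fix x y
  assume "Adj x y"
  then have xy: "x \<in> carrier G" "y \<in> carrier G" "x \<otimes> inv y \<in> S"
    by (auto simp: cay_adj_def)
  then have "inv (x \<otimes> inv y) \<in> S" using S_inv by blast
  moreover have "inv (x \<otimes> inv y) = y \<otimes> inv x" using xy by (simp add: inv_mult_group)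
  ultimately show "Adj y x" using xy by (simp add: cay_adj_def)
qed

lemma adj_irreflp: "irreflp Adj"
  using S_subset by (auto simp: irreflp_def cay_adj_def)

lemma reachable: "x \<in> carrier G \<Longrightarrow> y \<in> carrier G \<Longrightarrow> \<exists>n. (Adj ^^ n) x y"
  using drg by (auto simp: distance_regular_def connected_graph_def)

lemma intersection_numbers:
  assumes "x \<in> carrier G" and "y \<in> carrier G"
  shows "gdist Adj x y \<le> 3"
    and "gdist Adj x y < 3 \<Longrightarrow>
      card {z \<in> carrier G. Adj x z \<and> gdist Adj z y = gdist Adj x y + 1} = [k, k - 1, k - \<mu>] ! gdist Adj x y"
    and "1 \<le> gdist Adj x y \<Longrightarrow>
      card {z \<in> carrier G. Adj x z \<and> gdist Adj z y = gdist Adj x y - 1} = [1, \<mu>, k] ! (gdist Adj x y - 1)"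
  using drg assms unfolding distance_regular_def has_diameter_def Let_def numeral_3_eq_3
  by auto

lemma diameter: "\<exists>x\<in>carrier G. \<exists>y\<in>carrier G. gdist Adj x y = 3"
  using drg unfolding distance_regular_def has_diameter_def numeral_3_eq_3 by auto

lemma gdist_eq_1_iff_adj: "x \<in> carrier G \<Longrightarrow> y \<in> carrier G \<Longrightarrow> gdist Adj x y = 1 \<longleftrightarrow> Adj x y"
  using gdist_eq_1_iff[OF adj_irreflp reachable] .

lemma card_neighbours: "x \<in> carrier G \<Longrightarrow> card {z \<in> carrier G. Adj x z} = k"
proof -
  assume x: "x \<in> carrier G"
  have "gdist Adj x x = 0" using gdist_eq_0_iff[OF reachable[OF x x]] by simp
  moreover have "gdist Adj z x = 1" if "Adj x z" for z
    using that adj_symp adj_carrier gdist_eq_1_iff_adj by (metis sympD)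
  ultimately have "{z \<in> carrier G. Adj x z} = {z \<in> carrier G. Adj x z \<and> gdist Adj z x = gdist Adj x x + 1}"
    by auto
  then show ?thesis using intersection_numbers(2)[OF x x] \<open>gdist Adj x x = 0\<close> by simp
qed

lemma card_farther_plus_card_closer:
  assumes x: "x \<in> carrier G" and y: "y \<in> carrier G" and "x \<noteq> y"
  shows "card {z \<in> carrier G. Adj x z \<and> gdist Adj z y = gdist Adj x y + 1}
    + card {z \<in> carrier G. Adj x z \<and> gdist Adj z y = gdist Adj x y - 1} = k"
proof -
  define i where "i = gdist Adj x y"
  define b c where
    "b = card {z \<in> carrier G. Adj x z \<and> gdist Adj z y = i + 1}" and
    "c = card {z \<in> carrier G. Adj x z \<and> gdist Adj z y = i - 1}"
  have "i \<noteq> 0" using gdist_eq_0_iff[OF reachable[OF x y]] assms(3) by (simp add: i_def)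
  have c: "c = [1, \<mu>, k] ! (i - 1)"
    using intersection_numbers(3)[OF x y] \<open>i \<noteq> 0\<close> by (simp add: c_def i_def)
  have "c \<le> card {z \<in> carrier G. Adj x z}"
    unfolding c_def by (rule card_mono) (auto simp: finite_carrier)
  then have c_le: "c \<le> k" using card_neighbours[OF x] by simp
  have b: "b = (if i < 3 then [k, k - 1, k - \<mu>] ! i else 0)"
  proof (cases "i < 3")
    case True
    then show ?thesis using intersection_numbers(2)[OF x y] by (simp add: b_def i_def)
  next
    case False
    have "gdist Adj z y \<noteq> i + 1" if "z \<in> carrier G" for z
      using intersection_numbers(1)[OF that y] False by linarith
    then have empty: "{z \<in> carrier G. Adj x z \<and> gdist Adj z y = i + 1} = {}" by blast
    show ?thesis unfolding b_def empty using False by simp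
  qed
  have "i \<le> 3" using intersection_numbers(1)[OF x y] by (simp add: i_def)
  with \<open>i \<noteq> 0\<close> consider "i = 1" | "i = 2" | "i = 3" by linarith
  then have "b + c = k"
  proof cases
    case 1
    then have "b = k - 1" "c = 1" using b c by simp_all
    then show ?thesis using c_le by linarith
  next
    case 2
    then have "b = k - \<mu>" "c = \<mu>" using b c by simp_all
    then show ?thesis using c_le by linarith
  next
    case 3
    then have "b = 0" "c = k" using b c by simp_all
    then show ?thesis by simp
  qed
  then show ?thesis by (simp add: b_def c_def i_def)
qed

lemma adj_gdist_ne:
  assumes "Adj x z" and y: "y \<in> carrier G"
  shows "gdist Adj z y \<noteq> gdist Adj x y"
proof
  assume same: "gdist Adj z y = gdist Adj x y"
  have x: "x \<in> carrier G" and z: "z \<in> carrier G" using assms(1) adj_carrier by auto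
  show False
  proof (cases "x = y")
    case True
    then have "gdist Adj x y = 0" using gdist_eq_0_iff[OF reachable[OF x y]] by simp
    then have "z = y" using same gdist_eq_0_iff[OF reachable[OF z y]] by simp
    then show False using True assms(1) adj_irreflp by (simp add: irreflp_def)
  next
    case False
    define N B C where
      "N = {w \<in> carrier G. Adj x w}" and
      "B = {w \<in> carrier G. Adj x w \<and> gdist Adj w y = gdist Adj x y + 1}" and
      "C = {w \<in> carrier G. Adj x w \<and> gdist Adj w y = gdist Adj x y - 1}"
    have finite: "finite B" "finite C" "finite N"
      by (simp_all add: N_def B_def C_def finite_carrier)
    have "B \<inter> C = {}" by (auto simp: B_def C_def)
    then have "card (B \<union> C) = card N"
      using card_Un_disjoint[OF finite(1,2)] card_farther_plus_card_closer[OF x y False]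
        card_neighbours[OF x] by (simp add: N_def B_def C_def)
    moreover have "B \<union> C \<subseteq> N" by (auto simp: N_def B_def C_def)
    ultimately have "B \<union> C = N" using card_subset_eq[OF finite(3)] by blast
    moreover have "z \<in> N" using assms(1) z by (simp add: N_def)
    ultimately have "z \<in> B \<union> C" by blast
    moreover have "gdist Adj x y \<noteq> 0" using gdist_eq_0_iff[OF reachable[OF x y]] False by simp
    ultimately show False using same by (auto simp: B_def C_def)
  qed
qed

lemma adj_gdist_parity:
  assumes "Adj x z" and y: "y \<in> carrier G"
  shows "even (gdist Adj y z) \<longleftrightarrow> odd (gdist Adj y x)"
proof -
  have x: "x \<in> carrier G" and z: "z \<in> carrier G" using assms(1) adj_carrier by auto
  have "gdist Adj z y \<le> Suc (gdist Adj x y)"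
    using gdist_adj_le[OF sympD[OF adj_symp assms(1)] reachable[OF x y]] .
  moreover have "gdist Adj x y \<le> Suc (gdist Adj z y)"
    using gdist_adj_le[OF assms(1) reachable[OF z y]] .
  moreover have "gdist Adj z y \<noteq> gdist Adj x y" using adj_gdist_ne[OF assms] .
  ultimately have "gdist Adj z y = Suc (gdist Adj x y) \<or> gdist Adj x y = Suc (gdist Adj z y)"
    by linarith
  then have "even (gdist Adj z y) \<longleftrightarrow> odd (gdist Adj x y)" by auto
  then show ?thesis using gdist_sym[OF adj_symp] by metis
qed

lemma walk_gdist_parity:
  assumes "(Adj ^^ n) x y" and "w \<in> carrier G"
  shows "even (gdist Adj w y) \<longleftrightarrow> (even (gdist Adj w x) \<longleftrightarrow> even n)"
  using assms(1)
proof (induction n arbitrary: y)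
  case 0
  then show ?case by (auto elim: relpowp_0_E)
next
  case (Suc n)
  then obtain u where "(Adj ^^ n) x u" and "Adj u y" by (auto elim: relpowp_Suc_E)
  then show ?case using Suc.IH adj_gdist_parity[OF _ assms(2)] by auto
qed

lemma adj_mult_right:
  assumes "Adj x y" and g: "g \<in> carrier G"
  shows "Adj (x \<otimes> g) (y \<otimes> g)"
proof -
  have x: "x \<in> carrier G" and y: "y \<in> carrier G" using assms(1) adj_carrier by auto
  have "(x \<otimes> g) \<otimes> inv (y \<otimes> g) = x \<otimes> inv y"
    using x y g by (simp add: inv_mult_group m_assoc [symmetric]) (simp add: m_assoc)
  then show ?thesis using assms x y by (simp add: cay_adj_def)
qed

lemma walk_mult_right: "(Adj ^^ n) x y \<Longrightarrow> g \<in> carrier G \<Longrightarrow> (Adj ^^ n) (x \<otimes> g) (y \<otimes> g)"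
proof (induction n arbitrary: y)
  case 0
  then show ?case by (auto elim: relpowp_0_E)
next
  case (Suc n)
  then obtain u where "(Adj ^^ n) x u" and "Adj u y" by (auto elim: relpowp_Suc_E)
  then show ?case using Suc.IH Suc.prems(2) adj_mult_right by (metis relpowp_Suc_I)
qed

definition even_part :: "'a set" where
  "even_part = {g \<in> carrier G. even (gdist Adj \<one> g)}"

lemma mult_mem_even_part_iff:
  assumes g: "g \<in> carrier G" and h: "h \<in> carrier G"
  shows "g \<otimes> h \<in> even_part \<longleftrightarrow> (g \<in> even_part \<longleftrightarrow> h \<in> even_part)"
proof -
  have "(Adj ^^ gdist Adj \<one> g) \<one> g" using relpowp_gdist[OF reachable[OF one_closed g]] .
  then have "(Adj ^^ gdist Adj \<one> g) (\<one> \<otimes> h) (g \<otimes> h)" by (rule walk_mult_right[OF _ h])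
  then have "(Adj ^^ gdist Adj \<one> g) h (g \<otimes> h)" using h by simp
  then show ?thesis
    using walk_gdist_parity[OF _ one_closed] g h by (auto simp: even_part_def)
qed

lemma index_two_even_part: "index_two_subgroup G even_part"
proof (intro index_two_subgroup.intro index_two_subgroup_axioms.intro is_group)
  have one: "\<one> \<in> even_part"
    using gdist_eq_0_iff[OF reachable[OF one_closed one_closed]] by (simp add: even_part_def)
  show "subgroup even_part G"
  proof (rule subgroupI)
    show "even_part \<subseteq> carrier G" and "even_part \<noteq> {}" using one by (auto simp: even_part_def)
    show "inv h \<in> even_part" if "h \<in> even_part" for h
      using that one mult_mem_even_part_iff[of h "inv h"] by (auto simp: even_part_def)
    show "h \<otimes> h' \<in> even_part" if "h \<in> even_part" "h' \<in> even_part" for h h'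
      using that mult_mem_even_part_iff by (auto simp: even_part_def)
  qed
  show "x \<otimes> y \<in> even_part" if "x \<in> carrier G - even_part" "y \<in> carrier G - even_part" for x y
    using that mult_mem_even_part_iff by blast
qed

sublocale even: index_two_subgroup G even_part
  by (rule index_two_even_part)

lemma neighbours_one: "{z \<in> carrier G. Adj \<one> z} = S"
  using S_carrier S_inv by (force simp: cay_adj_def)

lemma S_outside_even_part: "S \<subseteq> carrier G - even_part"
proof
  fix s
  assume s: "s \<in> S"
  then have "gdist Adj \<one> s = 1" using neighbours_one gdist_eq_1_iff_adj S_carrier by blast
  then show "s \<in> carrier G - even_part" using s S_carrier by (auto simp: even_part_def)
qed

lemma card_S: "card S = k"
  using card_neighbours[OF one_closed] neighbours_one by simp

lemma card_common_neighbours: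
  assumes x: "x \<in> even_part" "x \<noteq> \<one>"
  shows "card {z \<in> S. x \<otimes> inv z \<in> S} = \<mu>"
proof -
  have x_carrier: "x \<in> carrier G" using x by (simp add: even_part_def)
  have "even (gdist Adj x \<one>)"
    using x gdist_sym[OF adj_symp] by (simp add: even_part_def)
  moreover have "gdist Adj x \<one> \<noteq> 0"
    using gdist_eq_0_iff[OF reachable[OF x_carrier one_closed]] x(2) by simp
  moreover have "gdist Adj x \<one> \<le> 3" using intersection_numbers(1)[OF x_carrier one_closed] .
  ultimately have "gdist Adj x \<one> = 2" by (auto elim!: evenE)
  moreover have "{z \<in> carrier G. Adj x z \<and> gdist Adj z \<one> = 1} = {z \<in> S. x \<otimes> inv z \<in> S}"
  proof (intro equalityI subsetI)
    fix z
    assume "z \<in> {z \<in> carrier G. Adj x z \<and> gdist Adj z \<one> = 1}"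
    then have z: "z \<in> carrier G" "Adj x z" "gdist Adj z \<one> = 1" by auto
    then have "z \<in> S" using gdist_eq_1_iff_adj[OF z(1) one_closed] by (simp add: cay_adj_def)
    then show "z \<in> {z \<in> S. x \<otimes> inv z \<in> S}" using z(2) by (simp add: cay_adj_def)
  next
    fix z
    assume z: "z \<in> {z \<in> S. x \<otimes> inv z \<in> S}"
    then have z_carrier: "z \<in> carrier G" using S_carrier by blast
    then have "gdist Adj z \<one> = 1"
      using gdist_eq_1_iff_adj[OF z_carrier one_closed] z by (simp add: cay_adj_def)
    then show "z \<in> {z \<in> carrier G. Adj x z \<and> gdist Adj z \<one> = 1}"
      using z z_carrier x_carrier by (simp add: cay_adj_def)
  qed
  ultimately show ?thesis using intersection_numbers(3)[OF x_carrier one_closed] by simp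
qed

lemma mu_less_k: "\<mu> < k"
proof -
  obtain x y where xy: "x \<in> carrier G" "y \<in> carrier G" "gdist Adj x y = 3" using diameter by blast
  have "(Adj ^^ Suc 2) x y" using relpowp_gdist[OF reachable[OF xy(1,2)]] xy(3) by simp
  then obtain z where z: "Adj x z" "(Adj ^^ 2) z y" using relpowp_Suc_D2 by metis
  have z_carrier: "z \<in> carrier G" using z(1) adj_carrier by blast
  have "gdist Adj z y \<le> 2" using gdist_le[OF z(2)] .
  moreover have "gdist Adj x y \<le> Suc (gdist Adj z y)"
    using gdist_adj_le[OF z(1) reachable[OF z_carrier xy(2)]] .
  ultimately have "gdist Adj z y = 2" using xy(3) by linarith
  then have "x \<in> {w \<in> carrier G. Adj z w \<and> gdist Adj w y = gdist Adj z y + 1}"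
    using xy sympD[OF adj_symp z(1)] by simp
  then have "card {w \<in> carrier G. Adj z w \<and> gdist Adj w y = gdist Adj z y + 1} \<noteq> 0"
    using finite_carrier by auto
  then show ?thesis
    using intersection_numbers(2)[OF z_carrier xy(2)] \<open>gdist Adj z y = 2\<close> by simp
qed

lemma S_nonempty: "S \<noteq> {}"
  using card_S mu_less_k by auto

end

section \<open>Involutions outside the even part\<close>

lemma (in group) card_pairs_with_product_in:
  assumes "S \<subseteq> carrier G" and "finite S" and "A \<subseteq> carrier G" and "finite A"
  shows "card {(w, z). w \<in> S \<and> z \<in> S \<and> w \<otimes> z \<in> A} = (\<Sum>x\<in>A. card {z \<in> S. x \<otimes> inv z \<in> S})"
proof -
  define fibre where "fibre x = (\<lambda>z. (x \<otimes> inv z, z)) ` {z \<in> S. x \<otimes> inv z \<in> S}" for x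
  have "{(w, z). w \<in> S \<and> z \<in> S \<and> w \<otimes> z \<in> A} = (\<Union>x\<in>A. fibre x)"
  proof (intro equalityI subsetI)
    fix p
    assume "p \<in> {(w, z). w \<in> S \<and> z \<in> S \<and> w \<otimes> z \<in> A}"
    then obtain w z where p: "p = (w, z)" "w \<in> S" "z \<in> S" "w \<otimes> z \<in> A" by blast
    have "w \<in> carrier G" "z \<in> carrier G" using p(2,3) assms(1) by auto
    then have eq: "(w \<otimes> z) \<otimes> inv z = w" by (simp add: m_assoc)
    have "(w, z) \<in> fibre (w \<otimes> z)"
      unfolding fibre_def image_iff using p(2,3) eq by auto
    then show "p \<in> (\<Union>x\<in>A. fibre x)" using p by blast
  next
    fix p
    assume "p \<in> (\<Union>x\<in>A. fibre x)"
    then obtain x z where p: "x \<in> A" "z \<in> S" "x \<otimes> inv z \<in> S" "p = (x \<otimes> inv z, z)"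
      by (auto simp: fibre_def)
    have "x \<in> carrier G" "z \<in> carrier G" using p(1,2) assms(1,3) by auto
    then have "(x \<otimes> inv z) \<otimes> z = x" by (simp add: m_assoc)
    then show "p \<in> {(w, z). w \<in> S \<and> z \<in> S \<and> w \<otimes> z \<in> A}" using p by simp
  qed
  moreover have "card (\<Union>x\<in>A. fibre x) = (\<Sum>x\<in>A. card (fibre x))"
  proof (rule card_UN_disjoint)
    show "\<forall>x\<in>A. \<forall>y\<in>A. x \<noteq> y \<longrightarrow> fibre x \<inter> fibre y = {}"
    proof (intro ballI impI)
      fix x y
      assume xy: "x \<in> A" "y \<in> A" "x \<noteq> y"
      show "fibre x \<inter> fibre y = {}"
      proof (rule ccontr)
        assume "fibre x \<inter> fibre y \<noteq> {}"
        then obtain z where "z \<in> S" and "x \<otimes> inv z = y \<otimes> inv z" by (auto simp: fibre_def)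
        then show False using right_cancel[of "inv z" x y] xy assms(1,3) by auto
      qed
    qed
  qed (use assms(2,4) in \<open>auto simp: fibre_def\<close>)
  moreover have "card (fibre x) = card {z \<in> S. x \<otimes> inv z \<in> S}" for x
    unfolding fibre_def by (rule card_image) (simp add: inj_on_def)
  ultimately show ?thesis by simp
qed

context dr_cayley_graph
begin

lemma card_pairs_with_product_in_even_part:
  assumes "A \<subseteq> even_part"
  shows "card {(w, z). w \<in> S \<and> z \<in> S \<and> w \<otimes> z \<in> A} =
    (if \<one> \<in> A then k + (card A - 1) * \<mu> else card A * \<mu>)"
proof -
  have A: "A \<subseteq> carrier G" "finite A"
    using assms finite_subset[OF _ finite_carrier] by (auto simp: even_part_def)
  have "card {(w, z). w \<in> S \<and> z \<in> S \<and> w \<otimes> z \<in> A} = (\<Sum>x\<in>A. card {z \<in> S. x \<otimes> inv z \<in> S})"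
    by (rule card_pairs_with_product_in[OF S_carrier finite_S A])
  also have "\<dots> = (\<Sum>x\<in>A. if x = \<one> then k else \<mu>)"
  proof (rule sum.cong)
    show "card {z \<in> S. x \<otimes> inv z \<in> S} = (if x = \<one> then k else \<mu>)" if "x \<in> A" for x
    proof (cases "x = \<one>")
      case True
      then have "{z \<in> S. x \<otimes> inv z \<in> S} = S" using S_carrier S_inv by auto
      then show ?thesis using True card_S by simp
    qed (use that assms card_common_neighbours in auto)
  qed simp
  also have "\<dots> = (if \<one> \<in> A then k + (card A - 1) * \<mu> else card A * \<mu>)"
  proof (cases "\<one> \<in> A")
    case True
    have "(\<Sum>x\<in>A - {\<one>}. if x = \<one> then k else \<mu>) = (\<Sum>x\<in>A - {\<one>}. \<mu>)"
      by (rule sum.cong) auto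
    then show ?thesis
      using sum.remove[OF A(2) True, of "\<lambda>x. if x = \<one> then k else \<mu>"] True A(2) by simp
  next
    case False
    then have "(\<Sum>x\<in>A. if x = \<one> then k else \<mu>) = (\<Sum>x\<in>A. \<mu>)"
      by (intro sum.cong) auto
    then show ?thesis using False by simp
  qed
  finally show ?thesis .
qed

lemma card_pairs_with_product_in_index_two:
  assumes K: "index_two_subgroup (G\<lparr>carrier := even_part\<rparr>) K"
    and squares: "\<And>s. s \<in> S \<Longrightarrow> s \<otimes> s \<notin> K"
  shows "card {(w, z). w \<in> S \<and> z \<in> S \<and> w \<otimes> z \<in> K} =
    card {(w, z). w \<in> S \<and> z \<in> S \<and> w \<otimes> z \<in> even_part - K}"
proof -
  interpret K: index_two_subgroup "G\<lparr>carrier := even_part\<rparr>" K by (rule K)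
  define pairs where "pairs B = {(w, z). w \<in> S \<and> z \<in> S \<and> w \<otimes> z \<in> B}" for B
  have flip: "w \<otimes> z \<in> K \<longleftrightarrow> inv w \<otimes> z \<in> even_part - K" if "w \<in> S" "z \<in> S" for w z
  proof -
    have w: "w \<in> carrier G - even_part" and z: "z \<in> carrier G - even_part"
      using that S_outside_even_part by auto
    have ww: "w \<otimes> w \<in> even_part - K"
      using even.outside_mult[OF w w] squares[OF that(1)] by blast
    have wz: "inv w \<otimes> z \<in> even_part" using even.outside_mult[OF even.inv_outside[OF w] z] .
    have "w \<otimes> z = (w \<otimes> w) \<otimes> (inv w \<otimes> z)"
      using w z by (simp add: m_assoc [symmetric]) (simp add: m_assoc)
    then show ?thesis
      using K.outside_mult[of "w \<otimes> w" "inv w \<otimes> z"] K.mult_outside_inside[of "w \<otimes> w" "inv w \<otimes> z"]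
        ww wz by auto
  qed
  have swap: "(inv w, z) \<in> pairs (even_part - K) \<longleftrightarrow> (w, z) \<in> pairs K" if "w \<in> S" "z \<in> S" for w z
    using flip[OF that] that S_inv by (simp add: pairs_def)
  have "bij_betw (\<lambda>(w, z). (inv w, z)) (pairs K) (pairs (even_part - K))"
  proof (rule bij_betw_byWitness[where f' = "\<lambda>(w, z). (inv w, z)"])
    show "\<forall>p\<in>pairs K. (\<lambda>(w, z). (inv w, z)) ((\<lambda>(w, z). (inv w, z)) p) = p"
      using S_carrier by (auto simp: pairs_def)
    show "\<forall>p\<in>pairs (even_part - K). (\<lambda>(w, z). (inv w, z)) ((\<lambda>(w, z). (inv w, z)) p) = p"
      using S_carrier by (auto simp: pairs_def)
    show "(\<lambda>(w, z). (inv w, z)) ` pairs K \<subseteq> pairs (even_part - K)"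
    proof
      fix p
      assume "p \<in> (\<lambda>(w, z). (inv w, z)) ` pairs K"
      then obtain w z where wz: "(w, z) \<in> pairs K" "p = (inv w, z)" by auto
      then have "w \<in> S" "z \<in> S" by (auto simp: pairs_def)
      then show "p \<in> pairs (even_part - K)" using swap wz by blast
    qed
    show "(\<lambda>(w, z). (inv w, z)) ` pairs (even_part - K) \<subseteq> pairs K"
    proof
      fix p
      assume "p \<in> (\<lambda>(w, z). (inv w, z)) ` pairs (even_part - K)"
      then obtain w z where wz: "(w, z) \<in> pairs (even_part - K)" "p = (inv w, z)" by auto
      then have "inv w \<in> S" "z \<in> S" "inv (inv w) = w" using S_inv S_carrier by (auto simp: pairs_def)
      then show "p \<in> pairs K" using swap[of "inv w" z] wz by simp
    qed
  qed
  then show ?thesis unfolding pairs_def by (rule bij_betw_same_card)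
qed

lemma involution_outside_if_odd_degree:
  assumes "odd k"
  shows "\<exists>b\<in>carrier G - even_part. b \<otimes> b = \<one>"
proof (rule ccontr)
  assume no_involution: "\<not> ?thesis"
  define \<iota> where "\<iota> x = (if x \<in> S then inv x else x)" for x
  have \<iota>_involutive: "\<iota> (\<iota> s) = s" if "s \<in> S" for s
    using that S_inv S_carrier by (auto simp: \<iota>_def)
  have "\<iota> permutes S"
  proof (rule bij_imp_permutes)
    show "bij_betw \<iota> S S"
      by (rule bij_betw_byWitness[where f' = \<iota>]) (use \<iota>_involutive S_inv in \<open>auto simp: \<iota>_def\<close>)
  qed (simp add: \<iota>_def)
  moreover have "\<iota> s \<noteq> s" if "s \<in> S" for s
  proof
    assume "\<iota> s = s"
    then have "s \<otimes> s = \<one>" using that S_carrier r_inv[of s] by (auto simp: \<iota>_def)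
    then show False using that S_outside_even_part no_involution by blast
  qed
  ultimately have "even (card S)"
    using fixpoint_free_involution_card_sign[OF _ finite_S] \<iota>_involutive by blast
  then show False using assms card_S by simp
qed

lemma involution_outside_if_odd_order:
  assumes "odd (card even_part)"
  shows "\<exists>b\<in>carrier G - even_part. b \<otimes> b = \<one>"
proof -
  obtain a where "a \<in> S" using S_nonempty by blast
  then have a: "a \<in> carrier G - even_part" using S_outside_even_part by blast
  have "finite even_part" using finite_subset[OF _ finite_carrier] even.H_carrier by blast
  then show ?thesis
    using even.involution_outside_if_square_in_odd_subgroup[OF even.subgroup_H subset_refl _ assms a
        even.outside_mult[OF a a]] by blast
qed

lemma involution_outside_if_order_twice_odd:
  assumes "card even_part = 2 * m" and "odd m"
  shows "\<exists>b\<in>carrier G - even_part. b \<otimes> b = \<one>"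
proof (rule ccontr)
  assume no_involution: "\<not> ?thesis"
  have fin: "finite even_part" using finite_subset[OF _ finite_carrier] even.H_carrier by blast
  obtain K where K: "index_two_subgroup (G\<lparr>carrier := even_part\<rparr>) K" and card_K: "card K = m"
    using group.index_two_subgroup_if_order_twice_odd[OF
        subgroup.subgroup_is_group[OF even.subgroup_H is_group] _ _ assms(2)] fin assms(1)
    by (auto simp: order_def)
  have K_sub: "subgroup K (G\<lparr>carrier := even_part\<rparr>)"
    using index_two_subgroup.subgroup_H[OF K] .
  then have K_G: "subgroup K G" and K_even: "K \<subseteq> even_part"
    using incl_subgroup[OF even.subgroup_H] subgroup.subset by force+
  have one_K: "\<one> \<in> K" using subgroup.one_closed[OF K_G] .
  have squares: "s \<otimes> s \<notin> K" if "s \<in> S" for s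
  proof
    assume "s \<otimes> s \<in> K"
    moreover have "s \<in> carrier G - even_part" using that S_outside_even_part by blast
    moreover have "finite K" using finite_subset[OF K_even fin] .
    ultimately show False
      using even.involution_outside_if_square_in_odd_subgroup[OF K_G K_even] card_K assms(2)
        no_involution by blast
  qed
  have "card (even_part - K) = m"
    using card_Diff_subset[OF finite_subset[OF K_even fin] K_even] assms(1) card_K by simp
  then have "k + (m - 1) * \<mu> = m * \<mu>"
    using card_pairs_with_product_in_index_two[OF K squares]
      card_pairs_with_product_in_even_part[OF K_even] card_pairs_with_product_in_even_part[of "even_part - K"]
      one_K card_K by auto
  moreover have "m \<ge> 1" using assms(2) by (cases m) auto
  ultimately have "k = \<mu>" by (cases m) (auto simp: algebra_simps)
  then show False using mu_less_k by simp
qed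

lemma involution_outside_even_part:
  assumes "\<not> 4 dvd card even_part \<or> odd k"
  shows "\<exists>b\<in>carrier G - even_part. b \<otimes> b = \<one>"
proof (cases "odd k")
  case True
  then show ?thesis by (rule involution_outside_if_odd_degree)
next
  case False
  then have not4: "\<not> 4 dvd card even_part" using assms by blast
  show ?thesis
  proof (cases "odd (card even_part)")
    case True
    then show ?thesis by (rule involution_outside_if_odd_order)
  next
    case False
    then obtain m where m: "card even_part = 2 * m" by blast
    with not4 have "odd m" by auto
    with m show ?thesis by (rule involution_outside_if_order_twice_odd)
  qed
qed

end

theorem proposition5p1:
  fixes G :: "('a, 'b) monoid_scheme" and S :: "'a set" and k \<mu> :: nat and H :: "'a set"
  assumes "group G" and "finite (carrier G)"
    and "S \<subseteq> carrier G - {\<one>\<^bsub>G\<^esub>}" and "\<forall>s\<in>S. inv\<^bsub>G\<^esub> s \<in> S"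
    and "distance_regular (carrier G) (cay_adj G S) [k, k - 1, k - \<mu>] [1, \<mu>, k]"
    and "H = {g \<in> carrier G. even (gdist (cay_adj G S) \<one>\<^bsub>G\<^esub> g)}"
    and "\<not> (4 dvd card H) \<or> odd k \<or> comm_group (G\<lparr>carrier := H\<rparr>)"
  shows "\<exists>\<phi> T. \<phi> \<in> iso (G\<lparr>carrier := H\<rparr>) (G\<lparr>carrier := H\<rparr>) \<and> (\<forall>h\<in>H. \<phi> (\<phi> h) = h) \<and>
           T \<subseteq> carrier (semidirect_Z2 (G\<lparr>carrier := H\<rparr>) \<phi>) - {\<one>\<^bsub>semidirect_Z2 (G\<lparr>carrier := H\<rparr>) \<phi>\<^esub>} \<and>
           (\<forall>t\<in>T. inv\<^bsub>semidirect_Z2 (G\<lparr>carrier := H\<rparr>) \<phi>\<^esub> t \<in> T) \<and>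
           graph_iso (carrier G) (cay_adj G S)
             (carrier (semidirect_Z2 (G\<lparr>carrier := H\<rparr>) \<phi>)) (cay_adj (semidirect_Z2 (G\<lparr>carrier := H\<rparr>) \<phi>) T)"
proof -
  interpret dr_cayley_graph G S k \<mu>
    using assms(1,3-5) by (simp add: dr_cayley_graph_def dr_cayley_graph_axioms_def)
  have H: "H = even_part" using assms(6) by (simp add: even_part_def)
  obtain a where "a \<in> S" using S_nonempty by blast
  have "\<exists>\<phi> T. cayley_semidirect_Z2_model G S even_part \<phi> T"
  proof (cases "comm_group (G\<lparr>carrier := even_part\<rparr>)")
    case True
    then show ?thesis
      using even.cayley_model_of_abelian[OF S_outside_even_part S_inv \<open>a \<in> S\<close>] by blast
  next
    case False
    then obtain b where "b \<in> carrier G - even_part" and "b \<otimes>\<^bsub>G\<^esub> b = \<one>\<^bsub>G\<^esub>"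
      using involution_outside_even_part assms(7) H by auto
    then show ?thesis
      using even.cayley_model_of_involution[OF S_outside_even_part S_inv] by blast
  qed
  then show ?thesis unfolding H cayley_semidirect_Z2_model_def .
qed

end
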